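(* Let $A,B$ be closed linear relations in $X^2$ such that $\{A,B\}$ is a dual pair with $(A^* )_s|_{D(B)}=B_s$ and $(B^* )_s|_{D(A)}=A_s$. Suppose $B^*(0)\cap N(A^* )=\{0\}$, $A^*(0)\cap N(B^* )=\{0\}$, and that $\tilde A\in\mathrm{Ext}\{A,B\}$ satisfies $\dim(D(B^* )/D(\tilde A))=\dim(D(\tilde A)/D(A))$. Then $\tilde A$ is a quasi-selfadjoint extension of $\{A,B\}$.
   Context: $X$ is a complex Hilbert space; linear relations are linear subspaces of $X^2=X\times X$, with domain $D(T)$, $N(T)=\{x:(x,0)\in T\}$, $T(0)=\{y:(0,y)\in T\}$. Adjoint: $T^*=\{(f,g):\langle g,x\rangle=\langle f,y\rangle\ \forall(x,y)\in T\}$. For closed $T$: $T_\infty=\{(0,y)\in T\}$, $T_s=T\ominus T_\infty$ (an operator with $D(T_s)=D(T)$). Closed relations $A,B$ form a dual pair $\{A,B\}$ if $A\subset B^*$ (equivalently $B\subset A^*$). $\mathrm{Ext}\{A,B\}$ is the set of closed relations $\tilde A$ with $A\subset\tilde A\subset B^*$. An extension $\tilde A\in\mathrm{Ext}\{A,B\}$ is quasi-selfadjoint if $\dim(D(\tilde A)/D(A))=\dim(D(\tilde A^* )/D(B))$. *)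

theory Defs
  imports "HOL-Analysis.Analysis"
begin

text \<open>HOL-Analysis only provides real inner product spaces, so we introduce complex
Hilbert spaces as a type class: a Banach space (complete normed space) carrying a
complex scalar multiplication compatible with the real one, and a complex inner
product (linear in the second, conjugate-linear in the first argument) inducing the norm.\<close>

class chilbert = banach +
  fixes scaleC :: "complex \<Rightarrow> 'a \<Rightarrow> 'a" (infixr \<open>*\<^sub>C\<close> 75)
    and cinner :: "'a \<Rightarrow> 'a \<Rightarrow> complex"
  assumes scaleC_add_right: "a *\<^sub>C (x + y) = a *\<^sub>C x + a *\<^sub>C y"
    and scaleC_add_left: "(a + b) *\<^sub>C x = a *\<^sub>C x + b *\<^sub>C x"
    and scaleC_scaleC: "a *\<^sub>C (b *\<^sub>C x) = (a * b) *\<^sub>C x"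
    and scaleC_one: "1 *\<^sub>C x = x"
    and scaleR_scaleC: "scaleR r x = complex_of_real r *\<^sub>C x"
    and cinner_commute: "cinner x y = cnj (cinner y x)"
    and cinner_add_right: "cinner x (y + z) = cinner x y + cinner x z"
    and cinner_scaleC_right: "cinner x (a *\<^sub>C y) = a * cinner x y"
    and cinner_self_norm: "cinner x x = complex_of_real ((norm x)\<^sup>2)"

definition lin_rel :: "('a::chilbert \<times> 'a) set \<Rightarrow> bool" where
  "lin_rel T \<longleftrightarrow> (0, 0) \<in> T \<and> (\<forall>p\<in>T. \<forall>q\<in>T. p + q \<in> T)
     \<and> (\<forall>c x y. (x, y) \<in> T \<longrightarrow> (c *\<^sub>C x, c *\<^sub>C y) \<in> T)"

definition closed_lin_rel :: "('a::chilbert \<times> 'a) set \<Rightarrow> bool" where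
  "closed_lin_rel T \<longleftrightarrow> lin_rel T \<and> closed T"

definition dom_rel :: "('a::chilbert \<times> 'a) set \<Rightarrow> 'a set" where
  "dom_rel T = {x. \<exists>y. (x, y) \<in> T}"

definition ker_rel :: "('a::chilbert \<times> 'a) set \<Rightarrow> 'a set" where
  "ker_rel T = {x. (x, 0) \<in> T}"

definition mul_rel :: "('a::chilbert \<times> 'a) set \<Rightarrow> 'a set" where
  "mul_rel T = {y. (0, y) \<in> T}"  \<comment> \<open>T(0)\<close>

definition adj_rel :: "('a::chilbert \<times> 'a) set \<Rightarrow> ('a \<times> 'a) set" where
  "adj_rel T = {(f, g). \<forall>(x, y)\<in>T. cinner g x = cinner f y}"

definition cinner2 :: "('a::chilbert \<times> 'a) \<Rightarrow> ('a \<times> 'a) \<Rightarrow> complex" where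
  "cinner2 p q = cinner (fst p) (fst q) + cinner (snd p) (snd q)"

definition rel_infty :: "('a::chilbert \<times> 'a) set \<Rightarrow> ('a \<times> 'a) set" where
  "rel_infty T = {p \<in> T. fst p = 0}"

definition rel_s :: "('a::chilbert \<times> 'a) set \<Rightarrow> ('a \<times> 'a) set" where
  "rel_s T = {p \<in> T. \<forall>q\<in>rel_infty T. cinner2 p q = 0}"

definition restrict_rel :: "('a::chilbert \<times> 'a) set \<Rightarrow> 'a set \<Rightarrow> ('a \<times> 'a) set" where
  "restrict_rel T D = {p \<in> T. fst p \<in> D}"

definition dual_pair :: "('a::chilbert \<times> 'a) set \<Rightarrow> ('a \<times> 'a) set \<Rightarrow> bool" where
  "dual_pair A B \<longleftrightarrow> closed_lin_rel A \<and> closed_lin_rel B \<and> A \<subseteq> adj_rel B"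

definition Ext :: "('a::chilbert \<times> 'a) set \<Rightarrow> ('a \<times> 'a) set \<Rightarrow> ('a \<times> 'a) set set" where
  "Ext A B = {At. closed_lin_rel At \<and> A \<subseteq> At \<and> At \<subseteq> adj_rel B}"

text \<open>S is a basis of V modulo U: S \<subseteq> V, S is linearly independent modulo U, and
U + span S = V. Then dim(V/U) is the cardinality of any such S.\<close>
definition quot_basis :: "'a::chilbert set \<Rightarrow> 'a set \<Rightarrow> 'a set \<Rightarrow> bool" where
  "quot_basis U V S \<longleftrightarrow> S \<subseteq> V \<and>
     (\<forall>F c. finite F \<longrightarrow> F \<subseteq> S \<longrightarrow> (\<Sum>v\<in>F. c v *\<^sub>C v) \<in> U \<longrightarrow> (\<forall>v\<in>F. c v = 0)) \<and>
     V = {u + (\<Sum>v\<in>F. c v *\<^sub>C v) | u F c. u \<in> U \<and> finite F \<and> F \<subseteq> S}"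

text \<open>dim(V/U) = dim(V'/U') (equality of cardinals).\<close>
definition quot_dim_eq :: "'a::chilbert set \<Rightarrow> 'a set \<Rightarrow> 'a set \<Rightarrow> 'a set \<Rightarrow> bool" where
  "quot_dim_eq V U V' U' \<longleftrightarrow>
     (\<exists>S S' f. quot_basis U V S \<and> quot_basis U' V' S' \<and> bij_betw f S S')"

definition quasi_selfadjoint :: "('a::chilbert \<times> 'a) set \<Rightarrow> ('a \<times> 'a) set \<Rightarrow> ('a \<times> 'a) set \<Rightarrow> bool" where
  "quasi_selfadjoint A B At \<longleftrightarrow> At \<in> Ext A B \<and>
     quot_dim_eq (dom_rel At) (dom_rel A) (dom_rel (adj_rel At)) (dom_rel B)"

end

theory Submission
  imports Defs
begin

text \<open>Write \<open>J(x, y) = (-y, x)\<close>, so that \<open>T\<^sup>* = J(T\<^sup>\<perp>)\<close>. The hypotheses on the operator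
parts and kernels first give \<open>B\<^sup>*(0) \<subseteq> A(0)\<close> and \<open>A\<^sup>*(0) \<subseteq> B(0)\<close>. Let \<open>W\<close> be the orthogonal
projection of \<open>X\<^sup>2\<close> onto \<open>\<tilde>A\<^sup>\<perp>\<close>. For \<open>(x, y) \<in> B\<^sup>*\<close> the vector \<open>JW(x, y)\<close> lies in \<open>\<tilde>A\<^sup>*\<close>, and
since \<open>B\<^sup>*(0) \<subseteq> \<tilde>A\<close> its first component \<open>\<phi> x\<close> depends on \<open>x\<close> only. The linear map
\<open>\<phi> : D(B\<^sup>*) \<rightarrow> D(\<tilde>A\<^sup>*)\<close> induces an isomorphism \<open>D(B\<^sup>*)/D(\<tilde>A) \<cong> D(\<tilde>A\<^sup>*)/D(B)\<close>: its kernel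
modulo \<open>D(B)\<close> is \<open>D(\<tilde>A)\<close> because \<open>J(B\<^sup>*)\<close> is orthogonal to \<open>B\<close> and \<open>\<tilde>A\<^sup>*(0) \<subseteq> B\<close>, and it is
onto modulo \<open>D(B)\<close> by projecting \<open>\<tilde>A\<^sup>*\<close> onto \<open>B\<close>. Hence
\<open>dim D(\<tilde>A\<^sup>*)/D(B) = dim D(B\<^sup>*)/D(\<tilde>A) = dim D(\<tilde>A)/D(A)\<close>.\<close>

section \<open>Complex inner product algebra\<close>

lemma scaleC_zero_left [simp]: "(0::complex) *\<^sub>C (x::'a::chilbert) = 0"
proof -
  have "(0::complex) *\<^sub>C x = 0 *\<^sub>C x + 0 *\<^sub>C x"
    by (metis add_0 scaleC_add_left)
  then show ?thesis by simp
qed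

lemma scaleC_zero_right [simp]: "c *\<^sub>C (0::'a::chilbert) = 0"
proof -
  have "c *\<^sub>C (0::'a) = c *\<^sub>C 0 + c *\<^sub>C 0"
    by (metis add_0 scaleC_add_right)
  then show ?thesis by simp
qed

lemma scaleC_minus1: "(-1::complex) *\<^sub>C (x::'a::chilbert) = - x"
  using scaleR_scaleC[of "-1" x] by simp

lemma scaleC_minus_right: "c *\<^sub>C (- x::'a::chilbert) = - (c *\<^sub>C x)"
  by (metis mult.commute scaleC_minus1 scaleC_scaleC)

lemma scaleC_diff_right: "c *\<^sub>C (x - y::'a::chilbert) = c *\<^sub>C x - c *\<^sub>C y"
  by (simp only: diff_conv_add_uminus scaleC_add_right scaleC_minus_right)

lemma cinner_zero_right [simp]: "cinner (x::'a::chilbert) 0 = 0"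
proof -
  have "cinner x (0::'a) = cinner x 0 + cinner x 0"
    by (metis add_0 cinner_add_right)
  then show ?thesis by simp
qed

lemma cinner_zero_left [simp]: "cinner 0 (x::'a::chilbert) = 0"
  using cinner_commute[of 0 x] by simp

lemma cinner_add_left: "cinner (x + y) (z::'a::chilbert) = cinner x z + cinner y z"
  by (metis cinner_add_right cinner_commute complex_cnj_add)

lemma cinner_scaleC_left: "cinner (a *\<^sub>C x) (y::'a::chilbert) = cnj a * cinner x y"
  by (metis cinner_commute cinner_scaleC_right complex_cnj_mult)

lemma cinner_minus_right: "cinner x (- y::'a::chilbert) = - cinner x y"
  by (metis cinner_scaleC_right mult_minus1 scaleC_minus1)

lemma cinner_minus_left: "cinner (- x) (y::'a::chilbert) = - cinner x y"
  by (metis cinner_commute cinner_minus_right complex_cnj_minus)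

lemma cinner_diff_right: "cinner x (y - z::'a::chilbert) = cinner x y - cinner x z"
  by (simp only: diff_conv_add_uminus cinner_add_right cinner_minus_right)

lemma cinner_diff_left: "cinner (x - y) (z::'a::chilbert) = cinner x z - cinner y z"
  by (simp only: diff_conv_add_uminus cinner_add_left cinner_minus_left)

lemma cinner_self_eq_zero: "cinner x (x::'a::chilbert) = 0 \<longleftrightarrow> x = 0"
  using cinner_self_norm[of x] by auto

lemma cinner_diff_scaleC_self:
  "cinner (w - t *\<^sub>C v) (w - t *\<^sub>C v) =
     cinner w w - t * cinner w v - cnj t * cinner v w + cnj t * t * cinner v (v::'a::chilbert)"
  by (simp add: cinner_diff_left cinner_diff_right cinner_scaleC_left cinner_scaleC_right algebra_simps)

lemma parallelogram_law:
  "norm (a - b)^2 + norm (a + b)^2 = 2 * norm a^2 + 2 * norm (b::'a::chilbert)^2"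
proof -
  have "complex_of_real (norm (a - b)^2 + norm (a + b)^2) = complex_of_real (2 * norm a^2 + 2 * norm b^2)"
    by (simp only: of_real_add of_real_mult cinner_self_norm[symmetric])
       (simp add: cinner_diff_left cinner_diff_right cinner_add_left cinner_add_right)
  then show ?thesis
    using of_real_eq_iff by blast
qed

instantiation prod :: (chilbert, chilbert) chilbert
begin

definition scaleC_prod_def: "scaleC c p = (c *\<^sub>C fst p, c *\<^sub>C snd p)"

definition cinner_prod_def: "cinner p q = cinner (fst p) (fst q) + cinner (snd p) (snd q)"

instance
proof
  fix a b :: complex and x y z :: "'a \<times> 'b" and r :: real
  show "a *\<^sub>C (x + y) = a *\<^sub>C x + a *\<^sub>C y"
    by (simp add: scaleC_prod_def scaleC_add_right)
  show "(a + b) *\<^sub>C x = a *\<^sub>C x + b *\<^sub>C x"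
    by (simp add: scaleC_prod_def scaleC_add_left)
  show "a *\<^sub>C b *\<^sub>C x = (a * b) *\<^sub>C x"
    by (simp add: scaleC_prod_def scaleC_scaleC)
  show "1 *\<^sub>C x = x"
    by (simp add: scaleC_prod_def scaleC_one)
  show "r *\<^sub>R x = complex_of_real r *\<^sub>C x"
    by (simp add: scaleC_prod_def scaleR_scaleC prod_eq_iff)
  show "cinner x y = cnj (cinner y x)"
    by (simp add: cinner_prod_def) (metis cinner_commute)
  show "cinner x (y + z) = cinner x y + cinner x z"
    by (simp add: cinner_prod_def cinner_add_right)
  show "cinner x (a *\<^sub>C y) = a * cinner x y"
    by (simp add: cinner_prod_def scaleC_prod_def cinner_scaleC_right algebra_simps)
  show "cinner x x = complex_of_real ((norm x)^2)"
    by (simp add: cinner_prod_def norm_prod_def cinner_self_norm)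
qed

end

lemma cinner_Pair [simp]: "cinner (a, b) (c, d) = cinner a c + cinner (b::'a::chilbert) (d::'a)"
  by (simp add: cinner_prod_def)

lemma scaleC_Pair [simp]: "k *\<^sub>C (a, b) = (k *\<^sub>C a, k *\<^sub>C (b::'a::chilbert))"
  by (simp add: scaleC_prod_def)

lemma cinner2_eq_cinner: "cinner2 p q = cinner p q"
  by (simp add: cinner_prod_def cinner2_def)

section \<open>Complex subspaces and orthogonal projection\<close>

definition csubspace :: "'a::chilbert set \<Rightarrow> bool" where
  "csubspace M \<longleftrightarrow> 0 \<in> M \<and> (\<forall>x\<in>M. \<forall>y\<in>M. x + y \<in> M) \<and> (\<forall>c. \<forall>x\<in>M. c *\<^sub>C x \<in> M)"

lemma csubspace_0: "csubspace M \<Longrightarrow> 0 \<in> M"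
  by (simp add: csubspace_def)

lemma csubspace_add: "csubspace M \<Longrightarrow> x \<in> M \<Longrightarrow> y \<in> M \<Longrightarrow> x + y \<in> M"
  by (simp add: csubspace_def)

lemma csubspace_scaleC: "csubspace M \<Longrightarrow> x \<in> M \<Longrightarrow> c *\<^sub>C x \<in> M"
  by (simp add: csubspace_def)

lemma csubspace_neg: "csubspace M \<Longrightarrow> x \<in> M \<Longrightarrow> - x \<in> M"
  by (metis csubspace_scaleC scaleC_minus1)

lemma csubspace_diff: "csubspace M \<Longrightarrow> x \<in> M \<Longrightarrow> y \<in> M \<Longrightarrow> x - y \<in> M"
  by (metis csubspace_add csubspace_neg diff_conv_add_uminus)

lemma csubspace_scaleR: "csubspace M \<Longrightarrow> x \<in> M \<Longrightarrow> r *\<^sub>R x \<in> M"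
  by (simp add: csubspace_scaleC scaleR_scaleC)

lemma csubspace_sum:
  assumes "csubspace M" "finite F" "F \<subseteq> M"
  shows "(\<Sum>v\<in>F. c v *\<^sub>C v) \<in> M"
  using assms(2,3)
  by (induction F rule: finite_induct)
     (auto simp: csubspace_0[OF assms(1)] intro: csubspace_add[OF assms(1)] csubspace_scaleC[OF assms(1)])

lemma minimizing_sequence_Cauchy:
  fixes M :: "'a::chilbert set"
  assumes M: "csubspace M"
    and d: "0 \<le> d" "\<And>m. m \<in> M \<Longrightarrow> d \<le> norm (z - m)"
    and f: "\<And>n. f n \<in> M" "\<And>n. norm (z - f n)^2 < d^2 + inverse (real (Suc n))"
  shows "Cauchy f"
proof -
  have bound: "norm (f n - f k)^2 \<le> 2 * inverse (real (Suc n)) + 2 * inverse (real (Suc k))" for n k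
  proof -
    define a b where "a = z - f n" and "b = z - f k"
    \<comment> \<open>the midpoint of \<open>f n\<close> and \<open>f k\<close> lies in \<open>M\<close>, so \<open>\<parallel>a + b\<parallel> \<ge> 2d\<close>\<close>
    have mid: "(1/2) *\<^sub>R (f n + f k) \<in> M"
      using M f(1) by (intro csubspace_scaleR csubspace_add)
    have "a + b = 2 *\<^sub>R (z - (1/2) *\<^sub>R (f n + f k))"
      unfolding a_def b_def by (simp add: algebra_simps scaleR_2)
    then have "norm (a + b) \<ge> 2 * d"
      using d(2)[OF mid] by simp
    then have "norm (a + b)^2 \<ge> 4 * d^2"
      using d(1) power_mono[of "2 * d" "norm (a + b)" 2] by (simp add: power_mult_distrib)
    moreover have "norm (f n - f k) = norm (a - b)"
      unfolding a_def b_def by (simp add: norm_minus_commute)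
    ultimately show ?thesis
      using parallelogram_law[of a b] f(2)[of n] f(2)[of k] unfolding a_def b_def by simp
  qed
  show "Cauchy f"
  proof (rule metric_CauchyI)
    fix e :: real
    assume e: "0 < e"
    obtain N where N: "inverse (real (Suc N)) < e^2 / 4"
      using reals_Archimedean[of "e^2 / 4"] e by auto
    have "dist (f m) (f n) < e" if "N \<le> m" "N \<le> n" for m n
    proof -
      have "inverse (real (Suc m)) \<le> inverse (real (Suc N))" "inverse (real (Suc n)) \<le> inverse (real (Suc N))"
        using that by (simp_all add: le_imp_inverse_le)
      moreover have "(dist (f m) (f n))^2 \<le> 2 * inverse (real (Suc m)) + 2 * inverse (real (Suc n))"
        using bound[of m n] by (simp add: dist_norm)
      ultimately have "(dist (f m) (f n))^2 < e^2"
        using N by linarith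
      then show ?thesis
        using e power_less_imp_less_base by fastforce
    qed
    then show "\<exists>N. \<forall>m\<ge>N. \<forall>n\<ge>N. dist (f m) (f n) < e"
      by blast
  qed
qed

lemma closed_csubspace_nearest_point:
  fixes M :: "'a::chilbert set"
  assumes M: "csubspace M" "closed M"
  shows "\<exists>m\<in>M. \<forall>m'\<in>M. norm (z - m) \<le> norm (z - m')"
proof -
  define d where "d = Inf ((\<lambda>m. norm (z - m)) ` M)"
  have ne: "(\<lambda>m. norm (z - m)) ` M \<noteq> {}"
    using csubspace_0[OF M(1)] by auto
  have bdd: "bdd_below ((\<lambda>m. norm (z - m)) ` M)"
    by (rule bdd_belowI[of _ 0]) auto
  have d_le: "d \<le> norm (z - m)" if "m \<in> M" for m
    unfolding d_def using bdd that by (auto intro: cInf_lower)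
  have d0: "0 \<le> d"
    unfolding d_def using ne by (auto intro: cInf_greatest)
  have "\<exists>m\<in>M. norm (z - m)^2 < d^2 + inverse (real (Suc n))" for n
  proof -
    have "d < sqrt (d^2 + inverse (real (Suc n)))"
      using d0 by (intro real_less_rsqrt) simp
    then obtain m where m: "m \<in> M" "norm (z - m) < sqrt (d^2 + inverse (real (Suc n)))"
      using cInf_lessD[OF ne] unfolding d_def by blast
    then have "norm (z - m)^2 < (sqrt (d^2 + inverse (real (Suc n))))^2"
      by (intro power_strict_mono) auto
    then show ?thesis
      using m(1) by (auto simp: add_nonneg_pos)
  qed
  then obtain f where f: "\<And>n. f n \<in> M" "\<And>n. norm (z - f n)^2 < d^2 + inverse (real (Suc n))"
    by metis
  have "Cauchy f"
    using minimizing_sequence_Cauchy[OF M(1) d0 d_le f] .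
  then obtain L where L: "f \<longlonglongrightarrow> L"
    using Cauchy_convergent_iff convergent_def by blast
  have "L \<in> M"
    using closed_sequentially[OF M(2) _ L] f(1) by blast
  moreover have "norm (z - L) \<le> norm (z - m')" if m': "m' \<in> M" for m'
  proof -
    have "(\<lambda>n. norm (z - f n)^2) \<longlonglongrightarrow> norm (z - L)^2"
      by (intro tendsto_intros L)
    moreover have "(\<lambda>n. norm (z - m')^2 + inverse (real (Suc n))) \<longlonglongrightarrow> norm (z - m')^2 + 0"
      by (intro tendsto_add tendsto_const LIMSEQ_inverse_real_of_nat)
    moreover have "norm (z - f n)^2 \<le> norm (z - m')^2 + inverse (real (Suc n))" for n
    proof -
      have "d^2 \<le> norm (z - m')^2"
        using d_le[OF m'] d0 by (intro power_mono) auto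
      then show ?thesis
        using f(2)[of n] by linarith
    qed
    ultimately have "norm (z - L)^2 \<le> norm (z - m')^2 + 0"
      by (intro LIMSEQ_le) auto
    then show ?thesis
      using power2_le_imp_le[OF _ norm_ge_zero] by simp
  qed
  ultimately show ?thesis
    by blast
qed

lemma closed_csubspace_orthogonal_decomposition:
  fixes M :: "'a::chilbert set"
  assumes M: "csubspace M" "closed M"
  shows "\<exists>m\<in>M. \<forall>v\<in>M. cinner (z - m) v = 0"
proof -
  obtain m where m: "m \<in> M" "\<And>m'. m' \<in> M \<Longrightarrow> norm (z - m) \<le> norm (z - m')"
    using closed_csubspace_nearest_point[OF M] by blast
  define w where "w = z - m"
  have "cinner w v = 0" if v: "v \<in> M" for v
  proof -
    \<comment> \<open>compare \<open>m\<close> with \<open>m + t v\<close>, where \<open>t = s \<langle>v, w\<rangle>\<close> for a small \<open>s > 0\<close>\<close>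
    define c s q nv nw where "c = cinner v w" and "s = 1 / (norm v^2 + 1)"
      and "q = (cmod c)^2" and "nv = (norm v)^2" and "nw = (norm w)^2"
    define t where "t = complex_of_real s * c"
    have s0: "0 < s" and snv: "s * nv \<le> 1"
      unfolding s_def nv_def by (simp_all add: add_nonneg_pos divide_le_eq_1)
    have "m + t *\<^sub>C v \<in> M"
      using M(1) m(1) v by (intro csubspace_add csubspace_scaleC)
    then have "norm w \<le> norm (w - t *\<^sub>C v)"
      using m(2) unfolding w_def by (simp add: diff_diff_eq)
    then have le: "nw \<le> norm (w - t *\<^sub>C v)^2"
      unfolding nw_def by (intro power_mono) auto
    have cwv: "cinner w v = cnj c"
      unfolding c_def by (rule cinner_commute)
    have cvv: "cinner v v = complex_of_real nv" and cww: "cinner w w = complex_of_real nw"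
      unfolding nv_def nw_def by (rule cinner_self_norm)+
    have ccq: "c * cnj c = complex_of_real q"
      unfolding q_def by (rule complex_norm_square[symmetric])
    have "complex_of_real (norm (w - t *\<^sub>C v)^2) =
        cinner w w - t * cinner w v - cnj t * cinner v w + cnj t * t * cinner v v"
      by (simp only: cinner_self_norm[symmetric] cinner_diff_scaleC_self)
    also have "\<dots> = complex_of_real nw - 2 * complex_of_real s * (c * cnj c)
        + (complex_of_real s)^2 * (c * cnj c) * complex_of_real nv"
      unfolding cwv cvv cww t_def c_def[symmetric] by (simp add: algebra_simps power2_eq_square)
    also have "\<dots> = complex_of_real (nw - 2 * s * q + s^2 * q * nv)"
      unfolding ccq by simp
    finally have "norm (w - t *\<^sub>C v)^2 = nw - 2 * s * q + s^2 * q * nv"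
      using of_real_eq_iff by blast
    moreover have "s * q * (s * nv) \<le> s * q"
      using snv s0 mult_left_mono[OF snv, of "s * q"] unfolding q_def by simp
    ultimately have "s * q \<le> 0"
      using le by (simp add: power2_eq_square algebra_simps)
    then have "c = 0"
      using s0 unfolding q_def by (simp add: mult_le_0_iff)
    then show ?thesis
      using cwv by simp
  qed
  then show ?thesis
    using m(1) unfolding w_def by blast
qed

definition cproj :: "'a::chilbert set \<Rightarrow> 'a \<Rightarrow> 'a" where
  "cproj M z = (SOME m. m \<in> M \<and> (\<forall>v\<in>M. cinner (z - m) v = 0))"

lemma cproj_unique:
  assumes M: "csubspace M"
    and m: "m \<in> M" "\<forall>v\<in>M. cinner (z - m) v = 0"
    and m': "m' \<in> M" "\<forall>v\<in>M. cinner (z - m') v = 0"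
  shows "m = m'"
proof -
  have "m' - m \<in> M"
    using csubspace_diff[OF M m'(1) m(1)] .
  then have "cinner (m' - m) (m' - m) = cinner (z - m) (m' - m) - cinner (z - m') (m' - m)"
    by (simp add: cinner_diff_left)
  also have "\<dots> = 0"
    using m(2) m'(2) \<open>m' - m \<in> M\<close> by simp
  finally show ?thesis
    by (simp add: cinner_self_eq_zero)
qed

context
  fixes M :: "'a::chilbert set"
  assumes M: "csubspace M" "closed M"
begin

lemma cproj_mem: "cproj M z \<in> M"
  and cproj_orthogonal: "v \<in> M \<Longrightarrow> cinner (z - cproj M z) v = 0"
proof -
  have "\<exists>m. m \<in> M \<and> (\<forall>v\<in>M. cinner (z - m) v = 0)"
    using closed_csubspace_orthogonal_decomposition[OF M] by blast
  then have "cproj M z \<in> M \<and> (\<forall>v\<in>M. cinner (z - cproj M z) v = 0)"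
    unfolding cproj_def by (rule someI_ex)
  then show "cproj M z \<in> M" "v \<in> M \<Longrightarrow> cinner (z - cproj M z) v = 0"
    by auto
qed

lemma cproj_eqI: "m \<in> M \<Longrightarrow> (\<And>v. v \<in> M \<Longrightarrow> cinner (z - m) v = 0) \<Longrightarrow> cproj M z = m"
  using cproj_unique[OF M(1)] cproj_mem cproj_orthogonal by blast

lemma cproj_add: "cproj M (z + z') = cproj M z + cproj M z'"
proof (rule cproj_eqI)
  show "cproj M z + cproj M z' \<in> M"
    using csubspace_add[OF M(1) cproj_mem cproj_mem] .
  fix v
  assume "v \<in> M"
  then show "cinner (z + z' - (cproj M z + cproj M z')) v = 0"
    by (simp add: add_diff_add cinner_add_left cproj_orthogonal)
qed

lemma cproj_scaleC: "cproj M (c *\<^sub>C z) = c *\<^sub>C cproj M z"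
proof (rule cproj_eqI)
  show "c *\<^sub>C cproj M z \<in> M"
    using csubspace_scaleC[OF M(1) cproj_mem] .
  fix v
  assume "v \<in> M"
  then show "cinner (c *\<^sub>C z - c *\<^sub>C cproj M z) v = 0"
    by (simp add: scaleC_diff_right[symmetric] cinner_scaleC_left cproj_orthogonal)
qed

end

section \<open>Dimension of quotients\<close>

definition quot_indep :: "'a::chilbert set \<Rightarrow> 'a set \<Rightarrow> bool" where
  "quot_indep U S \<longleftrightarrow>
     (\<forall>F c. finite F \<longrightarrow> F \<subseteq> S \<longrightarrow> (\<Sum>v\<in>F. c v *\<^sub>C v) \<in> U \<longrightarrow> (\<forall>v\<in>F. c v = 0))"

definition quot_span :: "'a::chilbert set \<Rightarrow> 'a set \<Rightarrow> 'a set" where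
  "quot_span U S = {u + (\<Sum>v\<in>F. c v *\<^sub>C v) | u F c. u \<in> U \<and> finite F \<and> F \<subseteq> S}"

lemma quot_basis_iff: "quot_basis U V S \<longleftrightarrow> S \<subseteq> V \<and> quot_indep U S \<and> V = quot_span U S"
  by (simp add: quot_basis_def quot_indep_def quot_span_def)

lemma subset_quot_span: "U \<subseteq> quot_span U S"
proof
  fix u
  assume "u \<in> U"
  then show "u \<in> quot_span U S"
    unfolding quot_span_def
    by (intro CollectI exI[of _ u] exI[of _ "{}"] exI[of _ "\<lambda>_. 0"]) simp
qed

lemma quot_dim_eq_sym: "quot_dim_eq V U V' U' \<Longrightarrow> quot_dim_eq V' U' V U"
  unfolding quot_dim_eq_def by (meson bij_betw_inv_into)

text \<open>A linear map \<open>\<Phi> : V \<rightarrow> V'\<close> with \<open>\<Phi>\<inverse>(U') = U\<close> which is onto modulo \<open>U'\<close> induces an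
isomorphism \<open>V/U \<cong> V'/U'\<close>.\<close>

locale quotient_iso =
  fixes \<Phi> :: "'a::chilbert \<Rightarrow> 'b::chilbert" and U V :: "'a set" and U' V' :: "'b set"
  assumes csubspace_V: "csubspace V" and csubspace_V': "csubspace V'"
    and csubspace_U': "csubspace U'" and U'_subset: "U' \<subseteq> V'"
    and map_add: "\<And>x y. x \<in> V \<Longrightarrow> y \<in> V \<Longrightarrow> \<Phi> (x + y) = \<Phi> x + \<Phi> y"
    and map_scaleC: "\<And>c x. x \<in> V \<Longrightarrow> \<Phi> (c *\<^sub>C x) = c *\<^sub>C \<Phi> x"
    and maps_to: "\<And>x. x \<in> V \<Longrightarrow> \<Phi> x \<in> V'"
    and maps_U: "\<And>x. x \<in> U \<Longrightarrow> \<Phi> x \<in> U'"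
    and reflects_U: "\<And>x. x \<in> V \<Longrightarrow> \<Phi> x \<in> U' \<Longrightarrow> x \<in> U"
    and onto_mod: "\<And>z. z \<in> V' \<Longrightarrow> \<exists>x\<in>V. z - \<Phi> x \<in> U'"
begin

lemma linear_sum: "finite F \<Longrightarrow> F \<subseteq> V \<Longrightarrow> \<Phi> (\<Sum>v\<in>F. c v *\<^sub>C v) = (\<Sum>v\<in>F. c v *\<^sub>C \<Phi> v)"
proof (induction F rule: finite_induct)
  case empty
  have "\<Phi> 0 = \<Phi> ((0::complex) *\<^sub>C 0)"
    by simp
  also have "\<dots> = 0"
    using map_scaleC[OF csubspace_0[OF csubspace_V], of 0] by simp
  finally show ?case
    by simp
next
  case (insert x F)
  then have "\<Phi> (c x *\<^sub>C x + (\<Sum>v\<in>F. c v *\<^sub>C v)) = c x *\<^sub>C \<Phi> x + \<Phi> (\<Sum>v\<in>F. c v *\<^sub>C v)"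
    by (simp add: map_add map_scaleC csubspace_scaleC[OF csubspace_V] csubspace_sum[OF csubspace_V])
  with insert show ?case
    by simp
qed

lemma indep_reflects:
  assumes "quot_indep U S" "S \<subseteq> V" "finite F" "F \<subseteq> S" "\<Phi> (\<Sum>v\<in>F. c v *\<^sub>C v) \<in> U'"
  shows "\<forall>v\<in>F. c v = 0"
proof -
  have "(\<Sum>v\<in>F. c v *\<^sub>C v) \<in> U"
    using assms(2-5) by (intro reflects_U csubspace_sum[OF csubspace_V]) auto
  then show ?thesis
    using assms(1,3,4) unfolding quot_indep_def by blast
qed

lemma inj_on_indep:
  assumes S: "quot_indep U S" "S \<subseteq> V"
  shows "inj_on \<Phi> S"
proof (rule inj_onI, rule ccontr)
  fix v1 v2
  assume v: "v1 \<in> S" "v2 \<in> S" "\<Phi> v1 = \<Phi> v2" "v1 \<noteq> v2"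
  define c where "c v = (if v = v1 then 1 else - 1 :: complex)" for v
  have "\<Phi> (\<Sum>v\<in>{v1, v2}. c v *\<^sub>C v) = (\<Sum>v\<in>{v1, v2}. c v *\<^sub>C \<Phi> v)"
    using v S(2) by (intro linear_sum) auto
  also have "\<dots> = \<Phi> v1 + (- 1) *\<^sub>C \<Phi> v2"
    using v(4) by (simp add: c_def scaleC_one)
  also have "\<dots> = 0"
    using v(3) by (simp add: scaleC_minus1)
  finally have "\<forall>v\<in>{v1, v2}. c v = 0"
    using v S csubspace_0[OF csubspace_U'] by (intro indep_reflects) auto
  then show False
    by (simp add: c_def)
qed

lemma quot_indep_image:
  assumes S: "quot_indep U S" "S \<subseteq> V"
  shows "quot_indep U' (\<Phi> ` S)"
  unfolding quot_indep_def
proof (intro allI impI)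
  fix F' c'
  assume F': "finite F'" "F' \<subseteq> \<Phi> ` S" "(\<Sum>v\<in>F'. c' v *\<^sub>C v) \<in> U'"
  define F where "F = {v \<in> S. \<Phi> v \<in> F'}"
  have FS: "F \<subseteq> S" and image: "\<Phi> ` F = F'"
    using F'(2) unfolding F_def by auto
  have inj: "inj_on \<Phi> F"
    using inj_on_indep[OF S] FS inj_on_subset by blast
  then have finite: "finite F"
    using F'(1) image finite_imageD by blast
  have "\<Phi> (\<Sum>v\<in>F. c' (\<Phi> v) *\<^sub>C v) = (\<Sum>v\<in>F'. c' v *\<^sub>C v)"
    using linear_sum[OF finite] FS S(2) sum.reindex[OF inj, of "\<lambda>w. c' w *\<^sub>C w"] image by auto
  then have "\<forall>v\<in>F. c' (\<Phi> v) = 0"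
    using F'(3) by (intro indep_reflects[OF S finite FS]) simp
  then show "\<forall>v\<in>F'. c' v = 0"
    using image by blast
qed

lemma quot_span_image:
  assumes S: "quot_basis U V S"
  shows "V' = quot_span U' (\<Phi> ` S)"
proof (intro equalityI subsetI)
  have SV: "S \<subseteq> V" and indep: "quot_indep U S" and span: "V = quot_span U S"
    using S unfolding quot_basis_iff by auto
  fix z
  assume "z \<in> V'"
  then obtain x where x: "x \<in> V" "z - \<Phi> x \<in> U'"
    using onto_mod by blast
  then obtain u F c where xF: "x = u + (\<Sum>v\<in>F. c v *\<^sub>C v)" "u \<in> U" "finite F" "F \<subseteq> S"
    using span unfolding quot_span_def by blast
  have inj: "inj_on \<Phi> F"
    using inj_on_indep[OF indep SV] xF(4) inj_on_subset by blast
  define c' where "c' w = c (the_inv_into F \<Phi> w)" for w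
  have "u \<in> V"
    using xF(2) span subset_quot_span by blast
  moreover have "(\<Sum>v\<in>F. c v *\<^sub>C v) \<in> V"
    using xF(3,4) SV by (intro csubspace_sum[OF csubspace_V]) auto
  ultimately have "\<Phi> x = \<Phi> u + (\<Sum>v\<in>F. c v *\<^sub>C \<Phi> v)"
    using xF SV by (simp add: map_add linear_sum)
  also have "(\<Sum>v\<in>F. c v *\<^sub>C \<Phi> v) = (\<Sum>w\<in>\<Phi> ` F. c' w *\<^sub>C w)"
    using sum.reindex[OF inj, of "\<lambda>w. c' w *\<^sub>C w"] the_inv_into_f_f[OF inj] by (simp add: c'_def)
  finally have "z = ((z - \<Phi> x) + \<Phi> u) + (\<Sum>w\<in>\<Phi> ` F. c' w *\<^sub>C w)"
    by (simp add: algebra_simps)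
  moreover have "(z - \<Phi> x) + \<Phi> u \<in> U'"
    using x(2) maps_U[OF xF(2)] by (rule csubspace_add[OF csubspace_U'])
  ultimately show "z \<in> quot_span U' (\<Phi> ` S)"
    unfolding quot_span_def using xF(3,4) by blast
next
  fix z
  assume "z \<in> quot_span U' (\<Phi> ` S)"
  then obtain u F c where z: "z = u + (\<Sum>v\<in>F. c v *\<^sub>C v)" "u \<in> U'" "finite F" "F \<subseteq> \<Phi> ` S"
    unfolding quot_span_def by blast
  have "\<Phi> ` S \<subseteq> V'"
    using S maps_to unfolding quot_basis_iff by blast
  then have "(\<Sum>v\<in>F. c v *\<^sub>C v) \<in> V'"
    using z(3,4) by (intro csubspace_sum[OF csubspace_V']) auto
  then show "z \<in> V'"
    using z(1,2) U'_subset csubspace_add[OF csubspace_V'] by blast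
qed

lemma quot_basis_image: "quot_basis U V S \<Longrightarrow> inj_on \<Phi> S \<and> quot_basis U' V' (\<Phi> ` S)"
  using inj_on_indep quot_indep_image quot_span_image maps_to unfolding quot_basis_iff by blast

end

lemma quot_dim_eq_transfer:
  assumes "quotient_iso \<Phi> U V U' V'" "quot_dim_eq V U W T"
  shows "quot_dim_eq V' U' W T"
  using assms(2) quotient_iso.quot_basis_image[OF assms(1)] unfolding quot_dim_eq_def
  by (metis bij_betw_inv_into bij_betw_trans inj_on_imp_bij_betw)

section \<open>Linear relations and their adjoints\<close>

lemma closed_lin_rel_iff: "closed_lin_rel T \<longleftrightarrow> csubspace T \<and> closed T"
  unfolding closed_lin_rel_def lin_rel_def csubspace_def scaleC_prod_def zero_prod_def
  by (auto simp: Ball_def)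

lemma adj_rel_iff_orthogonal: "(f, g) \<in> adj_rel T \<longleftrightarrow> (\<forall>p\<in>T. cinner (g, - f) p = 0)"
  by (auto simp: adj_rel_def cinner_minus_left)

lemma csubspace_adj_rel: "csubspace (adj_rel (T::('a::chilbert \<times> 'a) set))"
  unfolding csubspace_def
proof (intro conjI ballI allI)
  show "0 \<in> adj_rel T"
    by (simp add: adj_rel_def zero_prod_def)
next
  fix p q
  assume "p \<in> adj_rel T" "q \<in> adj_rel T"
  then show "p + q \<in> adj_rel T"
    by (cases p, cases q) (fastforce simp: adj_rel_def cinner_add_left)
next
  fix c p
  assume "p \<in> adj_rel T"
  then show "c *\<^sub>C p \<in> adj_rel T"
    by (cases p) (auto simp: adj_rel_def cinner_scaleC_left)
qed

lemma adj_rel_antimono: "T \<subseteq> T' \<Longrightarrow> adj_rel T' \<subseteq> adj_rel T"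
  unfolding adj_rel_def by blast

lemma subset_adj_rel_swap:
  assumes "A \<subseteq> adj_rel (B::('a::chilbert \<times> 'a) set)"
  shows "B \<subseteq> adj_rel A"
proof
  fix p
  assume p: "p \<in> B"
  have "cinner y f = cinner x g" if "(x, y) = p" "(f, g) \<in> A" for x y f g
  proof -
    have "cinner g x = cinner f y"
      using that assms p unfolding adj_rel_def by blast
    then show ?thesis
      by (metis cinner_commute)
  qed
  then show "p \<in> adj_rel A"
    unfolding adj_rel_def by (cases p) auto
qed

lemma csubspace_dom_rel:
  assumes T: "csubspace (T::('a::chilbert \<times> 'a) set)"
  shows "csubspace (dom_rel T)"
  unfolding csubspace_def dom_rel_def
proof (intro conjI ballI allI; clarify?)
  show "\<exists>y. (0, y) \<in> T"
    using csubspace_0[OF T] by (auto simp: zero_prod_def)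
next
  fix x y a b
  assume "(x, a) \<in> T" "(y, b) \<in> T"
  then show "\<exists>z. (x + y, z) \<in> T"
    by (metis add_Pair csubspace_add[OF T])
next
  fix c x a
  assume "(x, a) \<in> T"
  then show "\<exists>z. (c *\<^sub>C x, z) \<in> T"
    by (metis scaleC_Pair csubspace_scaleC[OF T])
qed

lemma mul_rel_mono: "T \<subseteq> T' \<Longrightarrow> mul_rel T \<subseteq> mul_rel T'"
  unfolding mul_rel_def by blast

lemma closed_csubspace_rel_infty:
  fixes T :: "('a::chilbert \<times> 'a) set"
  assumes "csubspace T" "closed T"
  shows "csubspace (rel_infty T)" "closed (rel_infty T)"
proof -
  have "rel_infty T = T \<inter> ({0} \<times> UNIV)"
    unfolding rel_infty_def by auto
  then show "csubspace (rel_infty T)" "closed (rel_infty T)"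
    using assms by (auto simp: csubspace_def zero_prod_def closed_Int closed_Times)
qed

lemma rel_s_decomposition:
  fixes T :: "('a::chilbert \<times> 'a) set"
  assumes T: "csubspace T" "closed T" and xy: "(x, y) \<in> T"
  shows "\<exists>r. (0, r) \<in> T \<and> (x, y - r) \<in> rel_s T"
proof -
  note R = closed_csubspace_rel_infty[OF T]
  let ?p = "cproj (rel_infty T) (x, y)"
  obtain r where r: "?p = (0, r)" "(0, r) \<in> T"
    using cproj_mem[OF R, of "(x, y)"] by (cases ?p) (auto simp: rel_infty_def)
  have "(x, y - r) \<in> T"
    using csubspace_diff[OF T(1) xy r(2)] by simp
  moreover have "(x, y - r) = (x, y) - ?p"
    using r(1) by simp
  ultimately show ?thesis
    using r(2) cproj_orthogonal[OF R, of _ "(x, y)"] unfolding rel_s_def cinner2_eq_cinner by auto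
qed

text \<open>For \<open>y \<in> B\<^sup>*(0)\<close> let \<open>w\<close> be its component orthogonal to \<open>A(0)\<close>. Then \<open>(0, w) \<in> (B\<^sup>*)\<^sub>\<infinity>\<close> is
orthogonal to \<open>A\<^sub>s \<subseteq> (B\<^sup>*)\<^sub>s\<close>, so \<open>w\<close> is orthogonal to the whole range of \<open>A\<close>, i.e. \<open>w \<in> N(A\<^sup>*)\<close>.\<close>

lemma mul_adj_subset_mul:
  fixes A B :: "('a::chilbert \<times> 'a) set"
  assumes A: "closed_lin_rel A" and AB: "A \<subseteq> adj_rel B"
    and rel_s: "rel_s A \<subseteq> rel_s (adj_rel B)"
    and mul_ker: "mul_rel (adj_rel B) \<inter> ker_rel (adj_rel A) = {0}"
  shows "mul_rel (adj_rel B) \<subseteq> mul_rel A"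
proof
  fix y
  assume "y \<in> mul_rel (adj_rel B)"
  then have y: "(0, y) \<in> adj_rel B"
    unfolding mul_rel_def by simp
  have csA: "csubspace A" and clA: "closed A"
    using A unfolding closed_lin_rel_iff by auto
  note R = closed_csubspace_rel_infty[OF csA clA]
  let ?p = "cproj (rel_infty A) (0, y)"
  obtain a where a: "?p = (0, a)" "(0, a) \<in> A"
    using cproj_mem[OF R, of "(0, y)"] by (cases ?p) (auto simp: rel_infty_def)
  define w where "w = y - a"
  have w_adj: "(0, w) \<in> adj_rel B"
    unfolding w_def using csubspace_diff[OF csubspace_adj_rel y, of "(0, a)"] a(2) AB by auto
  have w_orth_mul: "cinner w r = 0" if "(0, r) \<in> A" for r
    using cproj_orthogonal[OF R, of "(0, r)" "(0, y)"] that a(1)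
    unfolding w_def rel_infty_def by simp
  have "cinner w v = 0" if xv: "(x, v) \<in> A" for x v
  proof -
    obtain r where r: "(0, r) \<in> A" "(x, v - r) \<in> rel_s A"
      using rel_s_decomposition[OF csA clA xv] by blast
    moreover have "(0, w) \<in> rel_infty (adj_rel B)"
      using w_adj unfolding rel_infty_def by simp
    ultimately have "cinner (v - r) w = 0"
      using rel_s unfolding rel_s_def cinner2_def by fastforce
    then have "cinner w (v - r) = 0"
      by (metis cinner_commute complex_cnj_zero)
    then show ?thesis
      using w_orth_mul[OF r(1)] by (simp add: cinner_diff_right)
  qed
  then have "w \<in> ker_rel (adj_rel A)"
    unfolding ker_rel_def adj_rel_def by auto
  moreover have "w \<in> mul_rel (adj_rel B)"
    using w_adj unfolding mul_rel_def by simp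
  ultimately have "w = 0"
    using mul_ker by blast
  then show "y \<in> mul_rel A"
    using a(2) unfolding w_def mul_rel_def by simp
qed

section \<open>The isomorphism \<open>D(B\<^sup>*)/D(\<tilde>A) \<cong> D(\<tilde>A\<^sup>*)/D(B)\<close>\<close>

locale adj_extension =
  fixes B At :: "('a::chilbert \<times> 'a) set"
  assumes csubspace_B: "csubspace B" and closed_B: "closed B"
    and csubspace_At: "csubspace At" and closed_At: "closed At"
    and At_subset: "At \<subseteq> adj_rel B"
    and mul_adj_B: "mul_rel (adj_rel B) \<subseteq> mul_rel At"
    and mul_adj_At: "mul_rel (adj_rel At) \<subseteq> mul_rel B"
begin

definition residual :: "'a \<times> 'a \<Rightarrow> 'a \<times> 'a" where
  "residual u = u - cproj At u"

lemma residual_orthogonal: "v \<in> At \<Longrightarrow> cinner (residual u) v = 0"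
  unfolding residual_def by (rule cproj_orthogonal[OF csubspace_At closed_At])

lemma residual_add: "residual (u + u') = residual u + residual u'"
  unfolding residual_def cproj_add[OF csubspace_At closed_At] by simp

lemma residual_scaleC: "residual (c *\<^sub>C u) = c *\<^sub>C residual u"
  unfolding residual_def cproj_scaleC[OF csubspace_At closed_At] by (simp add: scaleC_diff_right)

lemma residual_eq_self: "(\<And>v. v \<in> At \<Longrightarrow> cinner u v = 0) \<Longrightarrow> residual u = u"
  unfolding residual_def
  by (simp add: cproj_eqI[OF csubspace_At closed_At csubspace_0[OF csubspace_At]])

lemma residual_eq_0_iff: "residual u = 0 \<longleftrightarrow> u \<in> At"
proof
  assume "residual u = 0"
  then show "u \<in> At"
    using cproj_mem[OF csubspace_At closed_At, of u] unfolding residual_def by simp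
next
  assume "u \<in> At"
  then show "residual u = 0"
    unfolding residual_def by (simp add: cproj_eqI[OF csubspace_At closed_At])
qed

lemma residual_mem_adj: "u \<in> adj_rel B \<Longrightarrow> residual u \<in> adj_rel B"
  unfolding residual_def
  using csubspace_diff[OF csubspace_adj_rel] cproj_mem[OF csubspace_At closed_At] At_subset by blast

lemma rotate_residual_mem_adj: "(- snd (residual u), fst (residual u)) \<in> adj_rel At"
  unfolding adj_rel_iff_orthogonal using residual_orthogonal by simp

definition adj_choice :: "'a \<Rightarrow> 'a" where
  "adj_choice x = (SOME y. (x, y) \<in> adj_rel B)"

lemma adj_choice: "x \<in> dom_rel (adj_rel B) \<Longrightarrow> (x, adj_choice x) \<in> adj_rel B"
  unfolding adj_choice_def dom_rel_def by (auto intro: someI_ex)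

lemma residual_adj_choice:
  assumes xy: "(x, y) \<in> adj_rel B"
  shows "residual (x, y) = residual (x, adj_choice x)"
proof -
  have x_dom: "(x, adj_choice x) \<in> adj_rel B"
    using xy by (intro adj_choice) (auto simp: dom_rel_def)
  have "(x - x, y - adj_choice x) \<in> adj_rel B"
    using csubspace_diff[OF csubspace_adj_rel xy x_dom] by simp
  then have "(0, y - adj_choice x) \<in> At"
    using mul_adj_B unfolding mul_rel_def by auto
  moreover have "(x, y) = (0, y - adj_choice x) + (x, adj_choice x)"
    by simp
  ultimately show ?thesis
    by (metis add_0 residual_add residual_eq_0_iff)
qed

definition phi :: "'a \<Rightarrow> 'a" where
  "phi x = - snd (residual (x, adj_choice x))"

lemma phi_eq: "(x, y) \<in> adj_rel B \<Longrightarrow> phi x = - snd (residual (x, y))"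
  unfolding phi_def by (simp add: residual_adj_choice)

lemma phi_add:
  assumes "x \<in> dom_rel (adj_rel B)" "x' \<in> dom_rel (adj_rel B)"
  shows "phi (x + x') = phi x + phi x'"
proof -
  have "(x + x', adj_choice x + adj_choice x') \<in> adj_rel B"
    using csubspace_add[OF csubspace_adj_rel adj_choice[OF assms(1)] adj_choice[OF assms(2)]] by simp
  then have "phi (x + x') = - snd (residual (x, adj_choice x) + residual (x', adj_choice x'))"
    by (simp add: phi_eq residual_add[symmetric])
  then show ?thesis
    by (simp add: phi_def)
qed

lemma phi_scaleC:
  assumes "x \<in> dom_rel (adj_rel B)"
  shows "phi (c *\<^sub>C x) = c *\<^sub>C phi x"
proof -
  have "(c *\<^sub>C x, c *\<^sub>C adj_choice x) \<in> adj_rel B"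
    using csubspace_scaleC[OF csubspace_adj_rel adj_choice[OF assms]] by simp
  then have "phi (c *\<^sub>C x) = - snd (c *\<^sub>C residual (x, adj_choice x))"
    by (simp add: phi_eq residual_scaleC[symmetric])
  then show ?thesis
    by (simp add: phi_def scaleC_prod_def scaleC_minus_right)
qed

lemma phi_mem_dom_adj: "phi x \<in> dom_rel (adj_rel At)"
  unfolding phi_def dom_rel_def using rotate_residual_mem_adj by blast

lemma phi_dom_At:
  assumes "x \<in> dom_rel At"
  shows "phi x \<in> dom_rel B"
proof -
  obtain z where "(x, z) \<in> At"
    using assms unfolding dom_rel_def by blast
  then have "phi x = - snd (residual (x, z))" and "residual (x, z) = 0"
    using At_subset phi_eq residual_eq_0_iff by auto
  then have "phi x = 0"
    by simp
  then show ?thesis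
    using csubspace_0[OF csubspace_B] unfolding dom_rel_def by (auto simp: zero_prod_def)
qed

text \<open>The rotated residual lies in \<open>\<tilde>A\<^sup>* \<subseteq> B + \<tilde>A\<^sup>*(0) \<subseteq> B\<close> and is orthogonal to \<open>B\<close>, hence it vanishes.\<close>

lemma phi_reflects_dom:
  assumes x: "x \<in> dom_rel (adj_rel B)" and phi: "phi x \<in> dom_rel B"
  shows "x \<in> dom_rel At"
proof -
  define u where "u = (x, adj_choice x)"
  obtain w1 w2 where w: "residual u = (w1, w2)"
    by (cases "residual u")
  have w_adj: "(w1, w2) \<in> adj_rel B"
    using residual_mem_adj[OF adj_choice[OF x]] w unfolding u_def by simp
  have rot: "(- w2, w1) \<in> adj_rel At"
    using rotate_residual_mem_adj[of u] w by simp
  obtain g where g: "(- w2, g) \<in> B"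
    using phi w unfolding phi_def u_def[symmetric] dom_rel_def by auto
  have "B \<subseteq> adj_rel At"
    using subset_adj_rel_swap[OF At_subset] .
  then have "(- w2 - - w2, w1 - g) \<in> adj_rel At"
    using csubspace_diff[OF csubspace_adj_rel rot, of "(- w2, g)"] g by auto
  then have "(0, w1 - g) \<in> B"
    using mul_adj_At unfolding mul_rel_def by auto
  then have "(- w2, g) + (0, w1 - g) \<in> B"
    using csubspace_add[OF csubspace_B g] by blast
  then have "(- w2, w1) \<in> B"
    by simp
  then have "cinner (w2, - w1) (- w2, w1) = 0"
    using w_adj unfolding adj_rel_iff_orthogonal by blast
  then have "cinner (w1, w2) (w1, w2) = 0"
    by (auto simp: cinner_minus_left cinner_minus_right add_eq_0_iff) (metis minus_equation_iff)
  then have "(w1, w2) = 0"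
    by (simp only: cinner_self_eq_zero)
  then have "u \<in> At"
    using w residual_eq_0_iff by simp
  then show ?thesis
    unfolding u_def dom_rel_def by blast
qed

text \<open>Project \<open>(z, g) \<in> \<tilde>A\<^sup>*\<close> onto \<open>B\<close>. The remainder \<open>(r1, r2)\<close> is orthogonal to \<open>B\<close>, so
\<open>(r2, -r1) \<in> B\<^sup>*\<close>, and it lies in \<open>\<tilde>A\<^sup>*\<close>, so \<open>(r2, -r1) \<perp> \<tilde>A\<close>; hence \<open>\<phi> r2 = r1\<close>.\<close>

lemma phi_onto_mod_dom:
  assumes "z \<in> dom_rel (adj_rel At)"
  shows "\<exists>x\<in>dom_rel (adj_rel B). z - phi x \<in> dom_rel B"
proof -
  obtain g where zg: "(z, g) \<in> adj_rel At"
    using assms unfolding dom_rel_def by blast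
  define b where "b = cproj B (z, g)"
  obtain r1 r2 where r: "(z, g) - b = (r1, r2)"
    by (cases "(z, g) - b")
  have b: "b \<in> B"
    unfolding b_def by (rule cproj_mem[OF csubspace_B closed_B])
  have "(r1, r2) \<in> adj_rel At"
    using csubspace_diff[OF csubspace_adj_rel zg, of b] b subset_adj_rel_swap[OF At_subset] r by auto
  then have "cinner (r2, - r1) v = 0" if "v \<in> At" for v
    using that unfolding adj_rel_iff_orthogonal by blast
  then have res: "residual (r2, - r1) = (r2, - r1)"
    by (rule residual_eq_self)
  have "(r2, - r1) \<in> adj_rel B"
    unfolding adj_rel_iff_orthogonal
  proof
    fix p
    assume "p \<in> B"
    then have "cinner (r1, r2) p = 0"
      using cproj_orthogonal[OF csubspace_B closed_B, of p "(z, g)"] r unfolding b_def by simp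
    then show "cinner (- r1, - r2) p = 0"
      by (metis uminus_Pair cinner_minus_left neg_equal_0_iff_equal)
  qed
  then have "phi r2 = r1" and "r2 \<in> dom_rel (adj_rel B)"
    using res by (auto simp: phi_eq dom_rel_def)
  moreover have "z - r1 \<in> dom_rel B"
    using b r unfolding dom_rel_def by (cases b) auto
  ultimately show ?thesis
    by metis
qed

sublocale quotient_iso phi "dom_rel At" "dom_rel (adj_rel B)" "dom_rel B" "dom_rel (adj_rel At)"
proof
  show "dom_rel B \<subseteq> dom_rel (adj_rel At)"
    using subset_adj_rel_swap[OF At_subset] unfolding dom_rel_def by blast
qed (simp_all add: csubspace_dom_rel csubspace_adj_rel csubspace_B phi_add phi_scaleC
    phi_mem_dom_adj phi_dom_At phi_reflects_dom phi_onto_mod_dom)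

end

theorem theorem3p2:
  fixes A B At :: "('a::chilbert \<times> 'a) set"
  assumes "dual_pair A B"
    and "restrict_rel (rel_s (adj_rel A)) (dom_rel B) = rel_s B"
    and "restrict_rel (rel_s (adj_rel B)) (dom_rel A) = rel_s A"
    and "mul_rel (adj_rel B) \<inter> ker_rel (adj_rel A) = {0}"
    and "mul_rel (adj_rel A) \<inter> ker_rel (adj_rel B) = {0}"
    and "At \<in> Ext A B"
    and "quot_dim_eq (dom_rel (adj_rel B)) (dom_rel At) (dom_rel At) (dom_rel A)"
  shows "quasi_selfadjoint A B At"
proof -
  have A: "closed_lin_rel A" and B: "closed_lin_rel B" and AB: "A \<subseteq> adj_rel B"
    using assms(1) unfolding dual_pair_def by auto
  have At: "closed_lin_rel At" and "A \<subseteq> At" and "At \<subseteq> adj_rel B"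
    using assms(6) unfolding Ext_def by auto
  have "mul_rel (adj_rel B) \<subseteq> mul_rel A"
    using assms(3) by (intro mul_adj_subset_mul[OF A AB _ assms(4)]) (auto simp: restrict_rel_def)
  moreover have "mul_rel (adj_rel A) \<subseteq> mul_rel B"
    using assms(2) subset_adj_rel_swap[OF AB]
    by (intro mul_adj_subset_mul[OF B _ _ assms(5)]) (auto simp: restrict_rel_def)
  ultimately interpret adj_extension B At
    using B At \<open>A \<subseteq> At\<close> \<open>At \<subseteq> adj_rel B\<close> mul_rel_mono adj_rel_antimono
    by unfold_locales (auto simp: closed_lin_rel_iff, blast+)
  have "quot_dim_eq (dom_rel (adj_rel At)) (dom_rel B) (dom_rel At) (dom_rel A)"
    using quot_dim_eq_transfer[OF quotient_iso_axioms assms(7)] .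
  then show ?thesis
    unfolding quasi_selfadjoint_def using assms(6) quot_dim_eq_sym by blast
qed

end
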